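(* Let $\sigma>0$, let $K_G\in\mathbb{R}^{m\times m}$ be a symmetric positive semidefinite matrix, let $W\in\mathbb{R}^{n\times m}$, and let $\mathbf{y}\in\mathbb{R}^n$. For every $\mathbf{x}\in\mathbb{R}^d$ let $\mathbf{w}_{\mathbf{x}}\in\mathbb{R}^m$ be a given vector. Define $\tilde K_X = W K_G W^T$, $\tilde{\mathbf{z}} = (\tilde K_X+\sigma^2 I)^{-1}\mathbf{y}$, $\tilde{\mathbf{k}}_{\mathbf{x}} = W K_G \mathbf{w}_{\mathbf{x}}$ (the SKI quantities), and $\bar{\mathbf{z}} = (K_G W^TW+\sigma^2 I)^{-1}K_G W^T\mathbf{y}$, $\bar C = \sigma^2 (K_GW^TW+\sigma^2 I)^{-1}K_G$ (the GSGP quantities). Then for all $\mathbf{x},\mathbf{x}'\in\mathbb{R}^d$: (i) (mean) $\mathbf{w}_{\mathbf{x}}^T K_G W^T\tilde{\mathbf{z}} = \mathbf{w}_{\mathbf{x}}^T\bar{\mathbf{z}}$; (ii) (covariance) $\mathbf{w}_{\mathbf{x}}^T K_G\mathbf{w}_{\mathbf{x}'} - \tilde{\mathbf{k}}_{\mathbf{x}}^T(\tilde K_X+\sigma^2 I)^{-1}\tilde{\mathbf{k}}_{\mathbf{x}'} = \mathbf{w}_{\mathbf{x}}^T\bar C\,\mathbf{w}_{\mathbf{x}'}$; (iii) (log likelihood) $-\tfrac12\big[\log\det(\tilde K_X+\sigma^2 I)+\mathbf{y}^T\tilde{\mathbf{z}}+n\log(2\pi)\big] = -\tfrac12\big[\log\det(K_GW^TW+\sigma^2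 I)+\tfrac{\mathbf{y}^T(\mathbf{y}-W\bar{\mathbf{z}})}{\sigma^2}+c\big]$, where $c = n\log(2\pi)+(n-m)\log\sigma^2$. In words: the SKI approximate inference expressions for posterior mean, posterior covariance and log likelihood coincide with the exact grid-structured GP (GSGP) inference expressions.
   Context: Setting: Gaussian process regression with data $\mathbf{x}_1,\dots,\mathbf{x}_n\in\mathbb{R}^d$, responses $\mathbf{y}\in\mathbb{R}^n$ and noise variance $\sigma^2$. $G=\{\mathbf{g}_1,\dots,\mathbf{g}_m\}\subseteq\mathbb{R}^d$ is a set of grid points, $k$ a positive-definite kernel, and $K_G=[k(\mathbf{g}_i,\mathbf{g}_j)]_{i,j}$. For $\mathbf{x}\in\mathbb{R}^d$, $\mathbf{w}_{\mathbf{x}}\in\mathbb{R}^m$ is a vector of interpolation weights from the grid to $\mathbf{x}$, and $W\in\mathbb{R}^{n\times m}$ has $i$-th row $\mathbf{w}_{\mathbf{x}_i}^T$. The SKI approximation replaces the kernel matrix by $WK_GW^T$; the grid-structured GP is $\boldsymbol\theta\sim\mathcal N(0,K_G)$, $f(\mathbf{x})=\mathbf{w}_{\mathbf{x}}^T\boldsymbol\theta$, observed with i.i.d. $\mathcal N(0,\sigma^2)$ noise; $\bar{\mathbf z}$ and $\bar C$ are the posterior mean and covariance of $\boldsymbol\theta$. *)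

theory Defs
  imports "HOL-Analysis.Analysis"
begin

definition sym_psd :: "real^'m^'m \<Rightarrow> bool" where
  "sym_psd K \<longleftrightarrow> transpose K = K \<and> (\<forall>v. 0 \<le> v \<bullet> (K *v v))"

end

theory Submission
  imports "Jordan_Normal_Form.Determinant" Defs
begin

(* With X = W and Y = K_G W^T the two matrices to be inverted are A = XY + s I_n and
   B = YX + s I_m, s = sigma^2.  Everything follows from the push-through identity
   Y A = B Y: it gives B^-1 Y = Y A^-1, which is the mean identity, and
   I - Y A^-1 X = s B^-1 (together with its mirror image I - X B^-1 Y = s A^-1),
   which yields the covariance and the data-fit term of the likelihood.  The
   log-determinants are related by Sylvester's identity det A s^m = s^n det B, and
   det A > 0 because W K_G W^T is positive semidefinite. *)

lemma matrix_add_rdistrib: "((A :: 'a::semiring_1^'k^'m) + B) ** (C :: 'a^'n^'k) = A ** C + B ** C"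
  by (simp add: matrix_matrix_mult_def vec_eq_iff sum.distrib distrib_right)

lemma matrix_diff_rdistrib: "((A :: 'a::ring_1^'k^'m) - B) ** (C :: 'a^'n^'k) = A ** C - B ** C"
  by (simp add: matrix_matrix_mult_def vec_eq_iff sum_subtractf left_diff_distrib)

lemma matrix_inv_mult:
  assumes "invertible (A :: 'a::semiring_1^'n^'n)"
  shows matrix_inv_right: "A ** matrix_inv A = mat 1"
    and matrix_inv_left: "matrix_inv A ** A = mat 1"
proof -
  have "\<exists>A'. A ** A' = mat 1 \<and> A' ** A = mat 1"
    using assms unfolding invertible_def .
  then have "A ** matrix_inv A = mat 1 \<and> matrix_inv A ** A = mat 1"
    unfolding matrix_inv_def by (rule someI_ex)
  then show "A ** matrix_inv A = mat 1" "matrix_inv A ** A = mat 1"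
    by auto
qed

lemma det_scaleR_mat_one: "det (s *\<^sub>R mat 1 :: real^'n^'n) = s ^ CARD('n)"
  by (subst det_diagonal) (auto simp: mat_def)

section \<open>Sylvester's determinant identity\<close>

(* HOL-Analysis has no block matrices; Sylvester's identity is proved for the matrices
   of Jordan_Normal_Form and transported along an enumeration of the index type. *)

definition cart_index :: "nat \<Rightarrow> 'a::finite" where
  "cart_index = (SOME f. bij_betw f {0..<CARD('a)} UNIV)"

lemma bij_betw_cart_index: "bij_betw (cart_index :: nat \<Rightarrow> 'a::finite) {0..<CARD('a)} UNIV"
proof -
  have "\<exists>f. bij_betw f {0..<CARD('a)} (UNIV :: 'a set)"
    using ex_bij_betw_nat_finite[of "UNIV :: 'a set"] by simp
  then show ?thesis
    unfolding cart_index_def by (rule someI_ex)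
qed

lemma cart_index_eq_iff:
  "i < CARD('a) \<Longrightarrow> j < CARD('a) \<Longrightarrow> (cart_index i = (cart_index j :: 'a::finite)) = (i = j)"
  using bij_betw_cart_index[where 'a='a] unfolding bij_betw_def inj_on_def by auto

definition mat_of_cart :: "'a::comm_ring_1^'c::finite^'r::finite \<Rightarrow> 'a Matrix.mat" where
  "mat_of_cart A = Matrix.mat CARD('r) CARD('c) (\<lambda>(i, j). A $ cart_index i $ cart_index j)"

lemma mat_of_cart_carrier:
  "mat_of_cart (A :: 'a::comm_ring_1^'c::finite^'r::finite) \<in> carrier_mat CARD('r) CARD('c)"
  unfolding mat_of_cart_def by simp

lemma mat_of_cart_mult:
  "mat_of_cart ((A :: 'a::comm_ring_1^'k::finite^'r::finite) ** (B :: 'a^'c::finite^'k))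
    = mat_of_cart A * mat_of_cart B"
proof (rule eq_matI)
  fix i j
  assume "i < dim_row (mat_of_cart A * mat_of_cart B)" "j < dim_col (mat_of_cart A * mat_of_cart B)"
  then have i: "i < CARD('r)" and j: "j < CARD('c)"
    by (auto simp: mat_of_cart_def)
  have "(mat_of_cart A * mat_of_cart B) $$ (i, j)
      = (\<Sum>k\<in>{0..<CARD('k)}. A $ cart_index i $ cart_index k * B $ cart_index k $ cart_index j)"
    using i j by (simp add: mat_of_cart_def scalar_prod_def)
  also have "\<dots> = (\<Sum>k\<in>UNIV. A $ cart_index i $ k * B $ k $ cart_index j)"
    by (rule sum.reindex_bij_betw[OF bij_betw_cart_index])
  finally show "mat_of_cart (A ** B) $$ (i, j) = (mat_of_cart A * mat_of_cart B) $$ (i, j)"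
    using i j by (simp add: mat_of_cart_def matrix_matrix_mult_def)
qed (auto simp: mat_of_cart_def)

lemma mat_of_cart_add:
  "mat_of_cart ((A :: 'a::comm_ring_1^'c::finite^'r::finite) + B) = mat_of_cart A + mat_of_cart B"
  by (rule eq_matI) (auto simp: mat_of_cart_def)

lemma mat_of_cart_scaleR:
  "mat_of_cart (c *\<^sub>R (A :: real^'c::finite^'r::finite)) = c \<cdot>\<^sub>m mat_of_cart A"
  by (rule eq_matI) (auto simp: mat_of_cart_def)

lemma mat_of_cart_one:
  "mat_of_cart (Finite_Cartesian_Product.mat 1 :: 'a::comm_ring_1^'n::finite^'n) = 1\<^sub>m CARD('n)"
  by (rule eq_matI) (auto simp: mat_of_cart_def Finite_Cartesian_Product.mat_def cart_index_eq_iff)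

lemma det_mat_of_cart:
  "Determinant.det (mat_of_cart (A :: 'a::comm_ring_1^'n::finite^'n)) = Determinants.det A"
proof -
  let ?N = "CARD('n)"
  let ?e = "cart_index :: nat \<Rightarrow> 'n"
  let ?e' = "inv_into {0..<?N} ?e"
  have e: "bij_betw ?e {0..<?N} UNIV"
    by (rule bij_betw_cart_index)
  have e': "bij_betw ?e' UNIV {0..<?N}"
    by (rule bij_betw_inv_into[OF e])
  have inj: "inj_on ?e {0..<?N}"
    using e by (simp add: bij_betw_def)
  have "Determinant.det (mat_of_cart A)
      = (\<Sum>q | q permutes {0..<?N}. of_int (sign q) * (\<Prod>i = 0..<?N. A $ ?e i $ ?e (q i)))"
    unfolding det_def'[OF mat_of_cart_carrier]
    by (intro sum.cong refl arg_cong2[where f="(*)"] prod.cong)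
       (auto simp: mat_of_cart_def permutes_in_image)
  also have "\<dots> = (\<Sum>p | p permutes (UNIV :: 'n set). of_int (sign p) * (\<Prod>i\<in>UNIV. A $ i $ p i))"
  proof (rule sum.reindex_bij_witness[where j = "map_permutation {0..<?N} ?e"
                                          and i = "map_permutation UNIV ?e'"])
    fix q
    assume q: "q \<in> {q. q permutes {0..<?N}}"
    show "map_permutation UNIV ?e' (map_permutation {0..<?N} ?e q) = q"
      by (rule map_permutation_compose_inv[OF e]) (use q inj in auto)
    show "map_permutation {0..<?N} ?e q \<in> {p. p permutes UNIV}"
      using map_permutation_permutes[OF e] q by auto
    have "(\<Prod>i\<in>UNIV. A $ i $ map_permutation {0..<?N} ?e q i)
        = (\<Prod>k = 0..<?N. A $ ?e k $ map_permutation {0..<?N} ?e q (?e k))"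
      by (rule prod.reindex_bij_betw[OF e, symmetric])
    also have "\<dots> = (\<Prod>k = 0..<?N. A $ ?e k $ ?e (q k))"
      by (intro prod.cong refl) (simp add: map_permutation_apply[OF inj])
    finally show "of_int (sign (map_permutation {0..<?N} ?e q))
          * (\<Prod>i\<in>UNIV. A $ i $ map_permutation {0..<?N} ?e q i)
        = of_int (sign q) * (\<Prod>i = 0..<?N. A $ ?e i $ ?e (q i))"
      using sign_map_permutation[OF inj] q by auto
  next
    fix p
    assume p: "p \<in> {p. p permutes (UNIV :: 'n set)}"
    show "map_permutation {0..<?N} ?e (map_permutation UNIV ?e' p) = p"
      by (rule map_permutation_compose_inv[OF e'])
         (use p e in \<open>auto intro: bij_betw_inv_into_right\<close>)
    show "map_permutation UNIV ?e' p \<in> {q. q permutes {0..<?N}}"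
      using map_permutation_permutes[OF e'] p by auto
  qed
  also have "\<dots> = Determinants.det A"
    unfolding Determinants.det_def by simp
  finally show ?thesis .
qed

lemma det_sylvester_mat:
  fixes X :: "'a::idom Matrix.mat"
  assumes X: "X \<in> carrier_mat n m" and Y: "Y \<in> carrier_mat m n"
  shows "Determinant.det (X * Y + s \<cdot>\<^sub>m 1\<^sub>m n) * s ^ m
       = s ^ n * Determinant.det (Y * X + s \<cdot>\<^sub>m 1\<^sub>m m)"
proof -
  (* P Q and L P are block triangular with diagonal blocks (XY + sI, sI) and (I, YX + sI) *)
  define P where "P = four_block_mat (1\<^sub>m n) (- X) Y (s \<cdot>\<^sub>m 1\<^sub>m m)"
  define Q where "Q = four_block_mat (s \<cdot>\<^sub>m 1\<^sub>m n) (0\<^sub>m n m) (- Y) (1\<^sub>m m)"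
  define L where "L = four_block_mat (1\<^sub>m n) (0\<^sub>m n m) (- Y) (1\<^sub>m m)"
  have P: "P \<in> carrier_mat (n + m) (n + m)" and Q: "Q \<in> carrier_mat (n + m) (n + m)"
    and L: "L \<in> carrier_mat (n + m) (n + m)"
    unfolding P_def Q_def L_def using X Y by auto
  have PQ: "P * Q = four_block_mat (X * Y + s \<cdot>\<^sub>m 1\<^sub>m n) (- X) (0\<^sub>m m n) (s \<cdot>\<^sub>m 1\<^sub>m m)"
    unfolding P_def Q_def using X Y by (subst mult_four_block_mat) auto
  have LP: "L * P = four_block_mat (1\<^sub>m n) (- X) (0\<^sub>m m n) (Y * X + s \<cdot>\<^sub>m 1\<^sub>m m)"
    unfolding P_def L_def using X Y by (subst mult_four_block_mat) auto
  have "Determinant.det (P * Q) = Determinant.det (X * Y + s \<cdot>\<^sub>m 1\<^sub>m n) * s ^ m"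
    unfolding PQ using X Y by (subst det_four_block_mat_lower_left_zero[where n = n and m = m]) auto
  moreover have "Determinant.det (L * P) = Determinant.det (Y * X + s \<cdot>\<^sub>m 1\<^sub>m m)"
    unfolding LP using X Y by (subst det_four_block_mat_lower_left_zero[where n = n and m = m]) auto
  moreover have "Determinant.det Q = s ^ n"
    unfolding Q_def using Y by (subst det_four_block_mat_upper_right_zero[where n = n and m = m]) auto
  moreover have "Determinant.det L = 1"
    unfolding L_def using Y by (subst det_four_block_mat_upper_right_zero[where n = n and m = m]) auto
  ultimately show ?thesis
    using det_mult[OF P Q] det_mult[OF L P] by (simp add: mult.commute)
qed

lemma det_sylvester:
  fixes X :: "real^'m::finite^'n::finite" and Y :: "real^'n^'m"
  shows "det (X ** Y + s *\<^sub>R mat 1) * s ^ CARD('m) = s ^ CARD('n) * det (Y ** X + s *\<^sub>R mat 1)"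
  unfolding det_mat_of_cart[symmetric] mat_of_cart_add mat_of_cart_mult mat_of_cart_scaleR mat_of_cart_one
  by (rule det_sylvester_mat[OF mat_of_cart_carrier mat_of_cart_carrier])

context
  fixes X :: "real^'m::finite^'n::finite" and Y :: "real^'n^'m" and s :: real
begin

lemma invertible_swap_plus_scaleR_one:
  assumes "s \<noteq> 0" and "invertible (X ** Y + s *\<^sub>R mat 1)"
  shows "invertible (Y ** X + s *\<^sub>R mat 1)"
  using det_sylvester[of X Y s] assms by (auto simp: invertible_det_nz)

lemma ln_det_swap_plus_scaleR_one:
  assumes "0 < s" and "0 < det (X ** Y + s *\<^sub>R mat 1)"
  shows "ln (det (X ** Y + s *\<^sub>R mat 1))
       = ln (det (Y ** X + s *\<^sub>R mat 1)) + (real CARD('n) - real CARD('m)) * ln s"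
proof -
  have "0 < s ^ CARD('n) * det (Y ** X + s *\<^sub>R mat 1)"
    using det_sylvester[of X Y s] assms by (metis mult_pos_pos zero_less_power)
  then have "0 < det (Y ** X + s *\<^sub>R mat 1)"
    using \<open>0 < s\<close> by (simp add: zero_less_mult_iff)
  then show ?thesis
    using arg_cong[OF det_sylvester[of X Y s], of ln] assms
    by (simp add: ln_mult ln_realpow algebra_simps)
qed

section \<open>The push-through identity\<close>

lemma matrix_push_through: "Y ** (X ** Y + s *\<^sub>R mat 1) = (Y ** X + s *\<^sub>R mat 1) ** Y"
  by (simp add: matrix_add_ldistrib matrix_add_rdistrib matrix_scalar_ac
      scalar_matrix_assoc[symmetric] matrix_mul_assoc)

context
  assumes invertible_XY: "invertible (X ** Y + s *\<^sub>R mat 1)"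
    and invertible_YX: "invertible (Y ** X + s *\<^sub>R mat 1)"
begin

lemma matrix_inv_push_through:
  "matrix_inv (Y ** X + s *\<^sub>R mat 1) ** Y = Y ** matrix_inv (X ** Y + s *\<^sub>R mat 1)"
proof -
  let ?A = "X ** Y + s *\<^sub>R mat 1" and ?B = "Y ** X + s *\<^sub>R mat 1"
  have "matrix_inv ?B ** Y = matrix_inv ?B ** (Y ** ?A) ** matrix_inv ?A"
    by (simp add: matrix_inv_right[OF invertible_XY] flip: matrix_mul_assoc)
  also have "\<dots> = (matrix_inv ?B ** ?B) ** Y ** matrix_inv ?A"
    by (simp add: matrix_push_through matrix_mul_assoc)
  finally show ?thesis
    by (simp add: matrix_inv_left[OF invertible_YX])
qed

lemma mat_one_diff_push_through:
  "mat 1 - Y ** matrix_inv (X ** Y + s *\<^sub>R mat 1) ** X = s *\<^sub>R matrix_inv (Y ** X + s *\<^sub>R mat 1)"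
proof -
  let ?A = "X ** Y + s *\<^sub>R mat 1" and ?B = "Y ** X + s *\<^sub>R mat 1"
  have "mat 1 = matrix_inv ?B ** ?B"
    by (simp add: matrix_inv_left[OF invertible_YX])
  also have "\<dots> = matrix_inv ?B ** Y ** X + s *\<^sub>R matrix_inv ?B"
    by (simp add: matrix_add_ldistrib matrix_scalar_ac matrix_mul_assoc)
  also have "\<dots> = Y ** matrix_inv ?A ** X + s *\<^sub>R matrix_inv ?B"
    by (simp add: matrix_inv_push_through)
  finally show ?thesis
    by (simp add: algebra_simps)
qed

end

end

definition psd_matrix :: "real^'n^'n \<Rightarrow> bool" where
  "psd_matrix P \<longleftrightarrow> (\<forall>v. 0 \<le> v \<bullet> (P *v v))"

lemma psd_matrix_if_sym_psd: "sym_psd K \<Longrightarrow> psd_matrix K"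
  by (simp add: sym_psd_def psd_matrix_def)

lemma psd_matrix_scaleR: "psd_matrix P \<Longrightarrow> 0 \<le> t \<Longrightarrow> psd_matrix (t *\<^sub>R P)"
  by (simp add: psd_matrix_def flip: scaleR_matrix_vector_assoc)

lemma psd_matrix_congruence:
  fixes K :: "real^'m::finite^'m" and W :: "real^'m^'n::finite"
  assumes "psd_matrix K"
  shows "psd_matrix (W ** K ** transpose W)"
  unfolding psd_matrix_def
proof
  fix v :: "real^'n"
  have "v \<bullet> ((W ** K ** transpose W) *v v) = (transpose W *v v) \<bullet> (K *v (transpose W *v v))"
    by (simp add: dot_lmul_matrix flip: matrix_vector_mul_assoc)
  then show "0 \<le> v \<bullet> ((W ** K ** transpose W) *v v)"
    using assms by (simp add: psd_matrix_def)
qed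

lemma invertible_psd_plus_scaleR_one:
  assumes "psd_matrix P" and "0 < s"
  shows "invertible (P + s *\<^sub>R mat 1)"
  unfolding invertible_left_inverse matrix_left_invertible_ker
proof (intro allI impI)
  fix v
  assume "(P + s *\<^sub>R mat 1) *v v = 0"
  then have "0 = v \<bullet> (P *v v) + s * (v \<bullet> v)"
    by (metis inner_add_right inner_scaleR_right inner_zero_right matrix_vector_mul_lid
        matrix_vector_mult_add_rdistrib scaleR_matrix_vector_assoc)
  moreover have "0 \<le> v \<bullet> (P *v v)"
    using assms(1) by (simp add: psd_matrix_def)
  ultimately have "v \<bullet> v \<le> 0"
    using \<open>0 < s\<close> by (smt (verit) mult_pos_pos inner_gt_zero_iff)
  then show "v = 0"
    by (metis inner_gt_zero_iff not_le)
qed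

lemma det_psd_plus_scaleR_one_pos:
  fixes P :: "real^'n::finite^'n"
  assumes "psd_matrix P" and "0 < s"
  shows "0 < det (P + s *\<^sub>R mat 1)"
proof (rule ccontr)
  (* t P + s I stays invertible for t \<ge> 0, so its determinant cannot reach 0 from s^n at t = 0 *)
  define f where "f t = det (t *\<^sub>R P + s *\<^sub>R mat 1)" for t
  assume "\<not> ?thesis"
  then have "f 1 \<le> 0"
    by (simp add: f_def)
  moreover have "0 < f 0"
    using \<open>0 < s\<close> by (simp add: f_def det_scaleR_mat_one)
  moreover have "continuous_on {0..1} f"
    unfolding f_def det_def by (intro continuous_intros)
  ultimately obtain t where "0 \<le> t" "f t = 0"
    using IVT2'[of f 1 0 0] by auto
  with invertible_psd_plus_scaleR_one[OF psd_matrix_scaleR[OF assms(1)] \<open>0 < s\<close>]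
  show False
    by (simp add: f_def invertible_det_nz)
qed

context
  fixes K :: "real^'m::finite^'m" and W :: "real^'m^'n::finite" and s :: real
  assumes sym_psd_K: "sym_psd K" and s_pos: "0 < s"
begin

abbreviation ski_matrix :: "real^'n^'n" where
  "ski_matrix \<equiv> W ** K ** transpose W + s *\<^sub>R mat 1"

abbreviation gsgp_matrix :: "real^'m^'m" where
  "gsgp_matrix \<equiv> K ** transpose W ** W + s *\<^sub>R mat 1"

lemma ski_matrix_assoc: "W ** (K ** transpose W) + s *\<^sub>R mat 1 = ski_matrix"
  by (simp add: matrix_mul_assoc)

lemma det_ski_matrix_pos: "0 < det ski_matrix"
  using sym_psd_K s_pos
  by (intro det_psd_plus_scaleR_one_pos psd_matrix_congruence psd_matrix_if_sym_psd)

lemma invertible_ski_matrix: "invertible ski_matrix"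
  using det_ski_matrix_pos by (simp add: invertible_det_nz)

lemma invertible_gsgp_matrix: "invertible gsgp_matrix"
  using invertible_swap_plus_scaleR_one[of s W "K ** transpose W"] invertible_ski_matrix s_pos
  by (simp add: ski_matrix_assoc)

lemma gsgp_resolvent_identities:
  shows "matrix_inv gsgp_matrix ** (K ** transpose W) = K ** transpose W ** matrix_inv ski_matrix"
    and "mat 1 - K ** transpose W ** matrix_inv ski_matrix ** W = s *\<^sub>R matrix_inv gsgp_matrix"
    and "mat 1 - W ** matrix_inv gsgp_matrix ** (K ** transpose W) = s *\<^sub>R matrix_inv ski_matrix"
  using matrix_inv_push_through[of W "K ** transpose W" s]
    mat_one_diff_push_through[of W "K ** transpose W" s]
    mat_one_diff_push_through[of "K ** transpose W" W s]
    invertible_ski_matrix invertible_gsgp_matrix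
  by (simp_all add: ski_matrix_assoc)

lemma ski_mean_eq_gsgp_mean:
  "K ** transpose W *v (matrix_inv ski_matrix *v y) = matrix_inv gsgp_matrix ** K ** transpose W *v y"
  by (metis gsgp_resolvent_identities(1) matrix_mul_assoc matrix_vector_mul_assoc)

lemma ski_cov_eq_gsgp_cov:
  "u \<bullet> (K *v v) - (W ** K *v u) \<bullet> (matrix_inv ski_matrix *v (W ** K *v v))
    = u \<bullet> (s *\<^sub>R (matrix_inv gsgp_matrix ** K) *v v)"
proof -
  have "(W ** K *v u) \<bullet> v' = u \<bullet> (K ** transpose W *v v')" for v'
    using sym_psd_K unfolding sym_psd_def
    by (metis dot_lmul_matrix inner_commute matrix_transpose_mul transpose_matrix_vector)
  then have "u \<bullet> (K *v v) - (W ** K *v u) \<bullet> (matrix_inv ski_matrix *v (W ** K *v v))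
      = u \<bullet> ((mat 1 - K ** transpose W ** matrix_inv ski_matrix ** W) ** K *v v)"
    by (simp add: inner_diff_right matrix_vector_mul_assoc matrix_diff_rdistrib
        matrix_vector_mult_diff_rdistrib matrix_mul_assoc)
  then show ?thesis
    by (simp add: gsgp_resolvent_identities(2) scalar_matrix_assoc)
qed

lemma ski_data_fit_eq_gsgp_data_fit:
  "y \<bullet> (y - W *v (matrix_inv gsgp_matrix ** K ** transpose W *v y)) / s
    = y \<bullet> (matrix_inv ski_matrix *v y)"
proof -
  have "y - W *v (matrix_inv gsgp_matrix ** K ** transpose W *v y) = s *\<^sub>R (matrix_inv ski_matrix *v y)"
    by (simp add: matrix_vector_mul_assoc matrix_vector_mult_diff_rdistrib scaleR_matrix_vector_assoc
        matrix_mul_assoc flip: gsgp_resolvent_identities(3))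
  then show ?thesis
    using s_pos by simp
qed

lemma ln_det_ski_matrix:
  "ln (det ski_matrix) = ln (det gsgp_matrix) + (real CARD('n) - real CARD('m)) * ln s"
  using ln_det_swap_plus_scaleR_one[of s W "K ** transpose W"] s_pos det_ski_matrix_pos
  by (simp add: ski_matrix_assoc)

end

theorem theorem1:
  fixes \<sigma> :: real
    and KG :: "real^'m^'m"
    and W :: "real^'m^'n"
    and y :: "real^'n"
    and w :: "real^'d \<Rightarrow> real^'m"
  assumes "\<sigma> > 0" and "sym_psd KG"
  shows "\<forall>x x'.
    (let KX = W ** KG ** transpose W;
         A = KX + (\<sigma>^2) *\<^sub>R mat 1;
         z = matrix_inv A *v y;
         k = (\<lambda>u. W ** KG *v w u);
         B = KG ** transpose W ** W + (\<sigma>^2) *\<^sub>R mat 1;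
         zbar = matrix_inv B ** KG ** transpose W *v y;
         Cbar = (\<sigma>^2) *\<^sub>R (matrix_inv B ** KG);
         c = real CARD('n) * ln (2 * pi) + (real CARD('n) - real CARD('m)) * ln (\<sigma>^2)
     in w x \<bullet> (KG ** transpose W *v z) = w x \<bullet> zbar
      \<and> w x \<bullet> (KG *v w x') - k x \<bullet> (matrix_inv A *v k x') = w x \<bullet> (Cbar *v w x')
      \<and> -(1/2) * (ln (det A) + y \<bullet> z + real CARD('n) * ln (2 * pi))
          = -(1/2) * (ln (det B) + (y \<bullet> (y - W *v zbar)) / \<sigma>^2 + c))"
proof -
  have "0 < \<sigma>^2"
    using assms(1) by simp
  note ski_gsgp = ski_mean_eq_gsgp_mean ski_cov_eq_gsgp_cov ski_data_fit_eq_gsgp_data_fit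
    ln_det_ski_matrix
  show ?thesis
    unfolding Let_def ski_gsgp[OF assms(2) \<open>0 < \<sigma>^2\<close>]
    by (simp add: algebra_simps)
qed

end
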